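(* Let $\psi_0$ be an eigenfunction of $-\frac12\Delta^\otimes$ (on antisymmetric functions) for the eigenvalue $\omega_0$, whose expansion $\psi_0=\sum_{\overline k}C(\overline k)\Lambda_{j=1}^{\overline N}e^{ik_jx_j}$ satisfies condition (adr), and assume $\int_{\overline{\mathbb T}}|\psi_0(\overline x)|^2d\overline x=Z$. Then the electronic charge density of $\psi_0$ is uniform: $\rho^e(x)=-e\sum_{j=1}^{\overline N}\int_{\mathbb T^{\overline N-1}}|\psi_0(\overline x)|^2\big|_{x_j=x}\prod_{l\ne j}dx_l=-eZ$ for all $x\in\mathbb T$. Equivalently, $\int_{\mathbb T^{\overline N-1}}|\psi_0(\overline x)|^2\big|_{x_1=x}dx_2\cdots dx_{\overline N}=Z/\overline N$ for all $x\in\mathbb T$.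
   Context: Fix $N\in\mathbb N$, $e>0$, $Z>0$. $\mathbb T:=\mathbb R^3/N\mathbb Z^3$, $\overline N:=N^3$, $\overline{\mathbb T}:=\mathbb T^{\overline N}$ with points $\overline x=(x_1,\dots,x_{\overline N})$, $\Xi:=\frac{2\pi}N\mathbb Z^3$, $\Delta^\otimes=\sum_j\Delta_{x_j}$. $\omega_0$ is the minimal eigenvalue of $-\frac12\Delta^\otimes$ on antisymmetric functions on $\overline{\mathbb T}$. The exterior product is $[\Lambda_{j=1}^{\overline N}f_j](\overline x)=\frac1{\sqrt{\overline N!}}\sum_{\pi\in S_{\overline N}}(-1)^{|\pi|}\prod_{j}f_j(x_{\pi(j)})$. Every eigenfunction $\psi_0$ for $\omega_0$ has an expansion $\psi_0=\sum_{\overline k}C(\overline k)\Lambda_{j=1}^{\overline N}e^{ik_jx_j}$ over sets $\overline k=\{k_1,\dots,k_{\overline N}\}$ of distinct $k_j\in\Xi$ with $\frac12\sum_jk_j^2=\omega_0$. Condition (adr): for any two distinct sets $\overline k\neq\overline k'$ with $C(\overline k)\neq0\neq C(\overline k')$ one has $\#(\overline k\setminus\overline k')\ge2$. *)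

theory Defs
  imports "HOL-Analysis.Analysis"
begin

text \<open>The torus T = R^3 / N Z^3 is represented by real^3 (functions on T are
N-periodic functions on real^3); integration over T is Lebesgue measure on the cube
[0,N]^3. Particles are indexed by {..<Nbar} with Nbar = N^3; a configuration is a
function nat => real^3 of which only the values at indices < Nbar matter.\<close>

type_synonym pt = "real^3"
type_synonym config = "nat \<Rightarrow> real^3"

definition Nbar :: "nat \<Rightarrow> nat" where
  "Nbar N = N ^ 3"

definition torus_measure :: "nat \<Rightarrow> pt measure" where
  "torus_measure N = restrict_space lborel (cbox 0 (\<chi> c. real N))"

definition torus_prod :: "nat \<Rightarrow> nat set \<Rightarrow> config measure" where
  "torus_prod N I = PiM I (\<lambda>_. torus_measure N)"

definition period_lattice :: "nat \<Rightarrow> pt set" where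
  "period_lattice N = {v. \<forall>c. \<exists>m::int. v $ c = real N * of_int m}"

definition Xi :: "nat \<Rightarrow> pt set" where
  "Xi N = {k. \<forall>c. \<exists>m::int. k $ c = 2 * pi / real N * of_int m}"

definition dir_line :: "(config \<Rightarrow> complex) \<Rightarrow> nat \<Rightarrow> 3 \<Rightarrow> config \<Rightarrow> real \<Rightarrow> complex" where
  "dir_line \<psi> j c x t = \<psi> (x(j := x j + t *\<^sub>R axis c 1))"

definition laplace_j :: "(config \<Rightarrow> complex) \<Rightarrow> nat \<Rightarrow> config \<Rightarrow> complex" where
  "laplace_j \<psi> j x =
     (\<Sum>c\<in>UNIV. vector_derivative
        (\<lambda>s. vector_derivative (dir_line \<psi> j c x) (at s)) (at 0))"

definition laplace_tensor :: "nat \<Rightarrow> (config \<Rightarrow> complex) \<Rightarrow> config \<Rightarrow> complex" where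
  "laplace_tensor n \<psi> x = (\<Sum>j<n. laplace_j \<psi> j x)"

definition antisym_eigenfunction :: "nat \<Rightarrow> real \<Rightarrow> (config \<Rightarrow> complex) \<Rightarrow> bool" where
  "antisym_eigenfunction N w \<psi> \<longleftrightarrow>
     (\<forall>x y. (\<forall>j<Nbar N. x j = y j) \<longrightarrow> \<psi> x = \<psi> y) \<and>
     (\<forall>x j v. v \<in> period_lattice N \<longrightarrow> \<psi> (x(j := x j + v)) = \<psi> x) \<and>
     (\<forall>x p. p permutes {..<Nbar N} \<longrightarrow> \<psi> (x \<circ> p) = of_int (sign p) * \<psi> x) \<and>
     (\<forall>x j c. j < Nbar N \<longrightarrow>
        (\<forall>s. dir_line \<psi> j c x differentiable (at s)) \<and>
        (\<lambda>s. vector_derivative (dir_line \<psi> j c x) (at s)) differentiable (at 0)) \<and>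
     (\<exists>x. \<psi> x \<noteq> 0) \<and>
     (\<forall>x. - (1/2) * laplace_tensor (Nbar N) \<psi> x = of_real w * \<psi> x)"

definition omega0 :: "nat \<Rightarrow> real" where
  "omega0 N = Inf {w. \<exists>\<psi>. antisym_eigenfunction N w \<psi>}"

definition ext_prod :: "nat \<Rightarrow> (nat \<Rightarrow> pt \<Rightarrow> complex) \<Rightarrow> config \<Rightarrow> complex" where
  "ext_prod n f x = (1 / of_real (sqrt (fact n))) *
     (\<Sum>p\<in>{p. p permutes {..<n}}. of_int (sign p) * (\<Prod>j<n. f j (x (p j))))"

definition plane_wave :: "pt \<Rightarrow> pt \<Rightarrow> complex" where
  "plane_wave k x = cis (k \<bullet> x)"

definition kbar_sets :: "nat \<Rightarrow> real \<Rightarrow> pt set set" where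
  "kbar_sets N w = {K. K \<subseteq> Xi N \<and> card K = Nbar N \<and> (1/2) * (\<Sum>k\<in>K. k \<bullet> k) = w}"

definition adr :: "pt set set \<Rightarrow> (pt set \<Rightarrow> complex) \<Rightarrow> bool" where
  "adr S C \<longleftrightarrow> (\<forall>K\<in>S. \<forall>K'\<in>S. K \<noteq> K' \<and> C K \<noteq> 0 \<and> C K' \<noteq> 0 \<longrightarrow> card (K - K') \<ge> 2)"

definition marginal :: "nat \<Rightarrow> (config \<Rightarrow> complex) \<Rightarrow> nat \<Rightarrow> pt \<Rightarrow> real" where
  "marginal N \<psi> j x =
     integral\<^sup>L (torus_prod N ({..<Nbar N} - {j})) (\<lambda>y. (cmod (\<psi> (y(j := x))))\<^sup>2)"

definition rho_e :: "nat \<Rightarrow> real \<Rightarrow> (config \<Rightarrow> complex) \<Rightarrow> pt \<Rightarrow> real" where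
  "rho_e N e \<psi> x = - e * (\<Sum>j<Nbar N. marginal N \<psi> j x)"

end

theory Submission
  imports Defs
begin

text \<open>Expanding each exterior product turns \<open>\<psi>0\<close> into a trigonometric polynomial in the
  particle positions, with one term per momentum set \<open>K\<close> and permutation \<open>p\<close>. Plane waves on
  the torus are orthogonal, so integrating \<open>|\<psi>0|\<^sup>2\<close> over all positions except \<open>x\<^sub>j\<close> keeps only
  the pairs of terms whose momenta agree at every particle \<open>l \<noteq> j\<close>. By (adr) two distinct
  momentum sets differ in at least two momenta, so such a pair consists of one term twice, and
  the marginal is the constant \<open>(\<Sum>\<^sub>K |C K|\<^sup>2) (N\<^sup>3)\<^bsup>Nbar-1\<^esup>\<close>. The same computation gives
  \<open>Z = (\<Sum>\<^sub>K |C K|\<^sup>2) (N\<^sup>3)\<^bsup>Nbar\<^esup>\<close>, and \<open>N\<^sup>3 = Nbar\<close>.\<close>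

lemma integral_lborel_prod:
  fixes f :: "'a::euclidean_space \<Rightarrow> real \<Rightarrow> 'b::{real_normed_field, banach, second_countable_topology}"
  assumes "\<And>b. b \<in> Basis \<Longrightarrow> integrable lborel (f b)"
  shows "integral\<^sup>L lborel (\<lambda>x. \<Prod>b\<in>Basis. f b (x \<bullet> b)) = (\<Prod>b\<in>Basis. integral\<^sup>L lborel (f b))"
proof -
  interpret product_sigma_finite "\<lambda>_::'a. lborel::real measure" by standard
  have [measurable]: "f b \<in> borel_measurable borel" if "b \<in> Basis" for b
    using borel_measurable_integrable[OF assms[OF that]] by simp
  have "integral\<^sup>L lborel (\<lambda>x. \<Prod>b\<in>Basis. f b (x \<bullet> b))
      = integral\<^sup>L (\<Pi>\<^sub>M b\<in>Basis. lborel) (\<lambda>g. \<Prod>b\<in>Basis. f b ((\<Sum>b'\<in>Basis. g b' *\<^sub>R b') \<bullet> b))"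
    by (subst lborel_eq) (rule integral_distr; measurable)
  also have "\<dots> = integral\<^sup>L (\<Pi>\<^sub>M b\<in>Basis. lborel) (\<lambda>g. \<Prod>b\<in>Basis. f b (g b))"
    by (intro Bochner_Integration.integral_cong prod.cong refl)
       (simp add: inner_sum_left inner_Basis if_distrib cong: if_cong)
  also have "\<dots> = (\<Prod>b\<in>Basis. integral\<^sup>L lborel (f b))"
    by (rule product_integral_prod) (auto intro: assms)
  finally show ?thesis .
qed

lemma integral_cis_interval:
  fixes a L :: real
  assumes "0 \<le> L" and "cis (a * L) = 1"
  shows "integral\<^sup>L lborel (\<lambda>t. indicator {0..L} t *\<^sub>R cis (a * t)) = (if a = 0 then of_real L else 0)"
proof (cases "a = 0")
  case True
  then show ?thesis
    using assms(1) by (simp add: scaleR_conv_of_real)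
next
  case False
  define F where "F t = cis (a * t) * (- \<i> / of_real a)" for t
  have deriv: "(F has_vector_derivative cis (a * t)) (at t within A)" for t A
  proof -
    have "((\<lambda>t. cis (a * t)) has_vector_derivative a *\<^sub>R (\<i> * cis (a * t))) (at t within A)"
      unfolding has_vector_derivative_def
      by (rule has_derivative_cis[THEN has_derivative_eq_rhs]) (auto intro!: derivative_eq_intros)
    then have "(F has_vector_derivative a *\<^sub>R (\<i> * cis (a * t)) * (- \<i> / of_real a)) (at t within A)"
      unfolding F_def by (rule has_vector_derivative_mult_left)
    then show ?thesis
      using False by (simp add: scaleR_conv_of_real field_simps)
  qed
  have "integral\<^sup>L lborel (\<lambda>t. indicator {0..L} t *\<^sub>R cis (a * t)) = F L - F 0"
    by (rule integral_FTC_atLeastAtMost[OF assms(1) deriv]) (intro continuous_intros)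
  then show ?thesis
    using False assms(2) by (simp add: F_def)
qed

lemma indicator_cbox_eq_prod:
  fixes a b x :: "'a::euclidean_space"
  shows "(indicator (cbox a b) x :: real) = (\<Prod>i\<in>Basis. indicator {a \<bullet> i..b \<bullet> i} (x \<bullet> i))"
proof (cases "x \<in> cbox a b")
  case True
  then show ?thesis
    by (simp add: mem_box)
next
  case False
  then obtain i where "i \<in> Basis" and "x \<bullet> i \<notin> {a \<bullet> i..b \<bullet> i}"
    by (auto simp: mem_box)
  then show ?thesis
    using False by (auto intro!: prod_zero bexI[of _ i])
qed
definition plane_wave_integral :: "nat \<Rightarrow> pt \<Rightarrow> complex" where
  "plane_wave_integral N k = integral\<^sup>L (torus_measure N) (plane_wave k)"

lemma plane_wave_integral_eq_prod:
  "plane_wave_integral N k =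
     (\<Prod>b\<in>Basis. integral\<^sup>L lborel (\<lambda>t. indicator {0..real N} t *\<^sub>R cis ((k \<bullet> b) * t)))"
proof -
  have cube: "indicator (cbox 0 (\<chi> c. real N)) z *\<^sub>R plane_wave k z
      = (\<Prod>b\<in>Basis. indicator {0..real N} (z \<bullet> b) *\<^sub>R cis ((k \<bullet> b) * (z \<bullet> b)))" for z :: pt
  proof -
    have "indicator (cbox 0 (\<chi> c. real N)) z = (\<Prod>b\<in>(Basis::pt set). indicator {0..real N} (z \<bullet> b) :: real)"
      unfolding indicator_cbox_eq_prod by (intro prod.cong) (auto simp: Basis_vec_def inner_axis)
    moreover have "plane_wave k z = (\<Prod>b\<in>Basis. cis ((k \<bullet> b) * (z \<bullet> b)))"
      by (simp add: plane_wave_def euclidean_inner[of k z] cis_conv_exp sum_distrib_left exp_sum)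
    ultimately show ?thesis
      by (simp add: scaleR_conv_of_real prod.distrib)
  qed
  have "plane_wave_integral N k = integral\<^sup>L lborel (\<lambda>z. indicator (cbox 0 (\<chi> c. real N)) z *\<^sub>R plane_wave k z)"
    unfolding plane_wave_integral_def torus_measure_def by (rule integral_restrict_space) simp
  also have "\<dots> = (\<Prod>b\<in>Basis. integral\<^sup>L lborel (\<lambda>t. indicator {0..real N} t *\<^sub>R cis ((k \<bullet> b) * t)))"
    unfolding cube
  proof (rule integral_lborel_prod)
    show "integrable lborel (\<lambda>t. indicator {0..real N} t *\<^sub>R cis ((k \<bullet> b) * t))" for b
      using borel_integrable_atLeastAtMost'[of 0 "real N" "\<lambda>t. cis ((k \<bullet> b) * t)"]
      unfolding set_integrable_def by (simp add: continuous_on_cis continuous_on_mult_left continuous_on_id)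
  qed
  finally show ?thesis .
qed

lemma Xi_diff:
  assumes "a \<in> Xi N" and "b \<in> Xi N"
  shows "a - b \<in> Xi N"
  unfolding Xi_def
proof (intro CollectI allI)
  fix c
  obtain m m' :: int where "a $ c = 2 * pi / real N * of_int m" and "b $ c = 2 * pi / real N * of_int m'"
    using assms unfolding Xi_def by blast
  then have "(a - b) $ c = 2 * pi / real N * of_int (m - m')"
    by (simp add: right_diff_distrib)
  then show "\<exists>m::int. (a - b) $ c = 2 * pi / real N * of_int m" ..
qed

lemma plane_wave_integral_Xi:
  assumes "N > 0" and "k \<in> Xi N"
  shows "plane_wave_integral N k = (if k = 0 then of_real (real N ^ 3) else 0)"
proof -
  have "integral\<^sup>L lborel (\<lambda>t. indicator {0..real N} t *\<^sub>R cis ((k \<bullet> b) * t))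
      = (if k \<bullet> b = 0 then of_real (real N) else 0)" if "b \<in> Basis" for b
  proof (rule integral_cis_interval)
    obtain c where "b = axis c 1"
      using \<open>b \<in> Basis\<close> by (auto simp: Basis_vec_def)
    moreover obtain m :: int where "k $ c = 2 * pi / real N * of_int m"
      using assms(2) unfolding Xi_def by blast
    ultimately have "(k \<bullet> b) * real N = 2 * pi * of_int m"
      using assms(1) by (simp add: inner_axis)
    then show "cis ((k \<bullet> b) * real N) = 1"
      by simp
  qed simp
  then have "plane_wave_integral N k = (\<Prod>b\<in>Basis. if k \<bullet> b = 0 then of_real (real N) else 0)"
    by (simp add: plane_wave_integral_eq_prod)
  also have "\<dots> = (if k = 0 then of_real (real N ^ 3) else 0)"
    by (auto simp: euclidean_eq_iff[of k] intro: prod_zero)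
  finally show ?thesis .
qed

lemma finite_measure_torus_measure: "finite_measure (torus_measure N)"
  by (rule finite_measureI)
     (simp add: torus_measure_def space_restrict_space emeasure_restrict_space emeasure_lborel_cbox_eq)

lemma integrable_plane_wave: "integrable (torus_measure N) (plane_wave k)"
proof -
  interpret finite_measure "torus_measure N"
    by (rule finite_measure_torus_measure)
  have "plane_wave k \<in> borel_measurable borel"
    unfolding plane_wave_def by (intro borel_measurable_continuous_onI continuous_intros)
  then have "plane_wave k \<in> borel_measurable (torus_measure N)"
    unfolding torus_measure_def by (intro measurable_restrict_space1) simp
  then show ?thesis
    by (intro integrable_const_bound[where B = 1]) (simp_all add: plane_wave_def)
qed

lemma
  assumes "finite I"
  shows integrable_torus_prod_plane_waves:
      "integrable (torus_prod N I) (\<lambda>y. \<Prod>l\<in>I. plane_wave (k l) (y l))"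
    and integral_torus_prod_plane_waves:
      "integral\<^sup>L (torus_prod N I) (\<lambda>y. \<Prod>l\<in>I. plane_wave (k l) (y l))
         = (\<Prod>l\<in>I. plane_wave_integral N (k l))"
proof -
  interpret product_sigma_finite "\<lambda>_::nat. torus_measure N"
    using finite_measure_torus_measure by (simp add: product_sigma_finite_def finite_measure_def)
  show "integrable (torus_prod N I) (\<lambda>y. \<Prod>l\<in>I. plane_wave (k l) (y l))"
    unfolding torus_prod_def by (rule product_integrable_prod[OF assms integrable_plane_wave])
  show "integral\<^sup>L (torus_prod N I) (\<lambda>y. \<Prod>l\<in>I. plane_wave (k l) (y l))
      = (\<Prod>l\<in>I. plane_wave_integral N (k l))"
    unfolding torus_prod_def plane_wave_integral_def
    by (rule product_integral_prod[OF assms integrable_plane_wave])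
qed

lemma plane_wave_mult_cnj: "plane_wave k x * cnj (plane_wave k' x) = plane_wave (k - k') x"
  by (simp add: plane_wave_def cis_cnj cis_mult inner_diff_left)

lemma torus_parseval:
  fixes a :: "'u \<Rightarrow> complex" and k :: "'u \<Rightarrow> nat \<Rightarrow> pt"
  assumes "N > 0" and "finite U" and "finite I"
    and Xi: "\<And>u l. u \<in> U \<Longrightarrow> l \<in> I \<Longrightarrow> k u l \<in> Xi N"
    and distinct: "\<And>u u'. u \<in> U \<Longrightarrow> u' \<in> U \<Longrightarrow> a u \<noteq> 0 \<Longrightarrow> a u' \<noteq> 0 \<Longrightarrow>
                     (\<forall>l\<in>I. k u l = k u' l) \<Longrightarrow> u = u'"
  shows "integral\<^sup>L (torus_prod N I) (\<lambda>y. (cmod (\<Sum>u\<in>U. a u * (\<Prod>l\<in>I. plane_wave (k u l) (y l))))\<^sup>2)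
       = (\<Sum>u\<in>U. (cmod (a u))\<^sup>2) * (real N ^ 3) ^ card I"
proof -
  define V where "V = real N ^ 3"
  define w where "w u u' y = (\<Prod>l\<in>I. plane_wave (k u l - k u' l) (y l))" for u u' and y :: config
  have square: "complex_of_real ((cmod (\<Sum>u\<in>U. a u * (\<Prod>l\<in>I. plane_wave (k u l) (y l))))\<^sup>2)
      = (\<Sum>u\<in>U. \<Sum>u'\<in>U. a u * cnj (a u') * w u u' y)" for y
    unfolding complex_norm_square cnj_sum sum_product w_def
    by (simp add: plane_wave_mult_cnj prod.distrib[symmetric] mult_ac)
  have orthogonal: "a u * cnj (a u') * (\<Prod>l\<in>I. plane_wave_integral N (k u l - k u' l))
      = (if u = u' then of_real ((cmod (a u))\<^sup>2 * V ^ card I) else 0)"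
    if "u \<in> U" and "u' \<in> U" for u u'
  proof -
    have "(\<Prod>l\<in>I. plane_wave_integral N (k u l - k u' l))
        = (if \<forall>l\<in>I. k u l = k u' l then of_real (V ^ card I) else 0)"
      using \<open>finite I\<close> by (auto simp: plane_wave_integral_Xi[OF \<open>N > 0\<close> Xi_diff] Xi that V_def
          intro: prod_zero)
    then show ?thesis
      using distinct[OF that] by (auto simp: complex_norm_square simp del: of_real_power)
  qed
  have "complex_of_real (integral\<^sup>L (torus_prod N I)
          (\<lambda>y. (cmod (\<Sum>u\<in>U. a u * (\<Prod>l\<in>I. plane_wave (k u l) (y l))))\<^sup>2))
      = integral\<^sup>L (torus_prod N I) (\<lambda>y. \<Sum>u\<in>U. \<Sum>u'\<in>U. a u * cnj (a u') * w u u' y)"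
    by (simp only: integral_complex_of_real[symmetric] square)
  also have "\<dots> = (\<Sum>u\<in>U. \<Sum>u'\<in>U. a u * cnj (a u') * (\<Prod>l\<in>I. plane_wave_integral N (k u l - k u' l)))"
    unfolding w_def using \<open>finite I\<close>
    by (simp add: integrable_torus_prod_plane_waves integral_torus_prod_plane_waves)
  also have "\<dots> = of_real ((\<Sum>u\<in>U. (cmod (a u))\<^sup>2) * V ^ card I)"
    using \<open>finite U\<close> by (simp add: orthogonal sum_distrib_right)
  finally show ?thesis
    unfolding V_def by (simp only: of_real_eq_iff)
qed

lemma ext_prod_plane_waves:
  "ext_prod n (\<lambda>j. plane_wave (k j)) y
     = (\<Sum>p\<in>{p. p permutes {..<n}}. of_int (sign p) / of_real (sqrt (fact n))
          * (\<Prod>l<n. plane_wave (k (inv p l)) (y l)))"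
proof -
  have "(\<Prod>j<n. plane_wave (k j) (y (p j))) = (\<Prod>l<n. plane_wave (k (inv p l)) (y l))"
    if "p permutes {..<n}" for p
    using prod.permute[OF that, of "\<lambda>l. plane_wave (k (inv p l)) (y l)"] that
    by (simp add: permutes_inverses(2))
  then show ?thesis
    unfolding ext_prod_def sum_distrib_left by (intro sum.cong) auto
qed

definition slater_coeff :: "('a \<Rightarrow> complex) \<Rightarrow> nat \<Rightarrow> 'a \<times> (nat \<Rightarrow> nat) \<Rightarrow> complex" where
  "slater_coeff C n u = C (fst u) * of_int (sign (snd u)) / of_real (sqrt (fact n))"

definition slater_momentum :: "('a \<Rightarrow> nat \<Rightarrow> pt) \<Rightarrow> 'a \<times> (nat \<Rightarrow> nat) \<Rightarrow> nat \<Rightarrow> pt" where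
  "slater_momentum enum u l = enum (fst u) (inv (snd u) l)"

lemma slater_expansion:
  assumes "finite S"
  shows "(\<Sum>K\<in>S. C K * ext_prod n (\<lambda>j. plane_wave (enum K j)) y)
    = (\<Sum>u\<in>S \<times> {p. p permutes {..<n}}.
         slater_coeff C n u * (\<Prod>l<n. plane_wave (slater_momentum enum u l) (y l)))"
  unfolding ext_prod_plane_waves sum_distrib_left sum.cartesian_product'
  by (simp add: slater_coeff_def slater_momentum_def mult_ac)

lemma sum_norm_slater_coeff:
  "(\<Sum>u\<in>S \<times> {p. p permutes {..<n}}. (cmod (slater_coeff C n u))\<^sup>2) = (\<Sum>K\<in>S. (cmod (C K))\<^sup>2)"
proof -
  have "(cmod (slater_coeff C n (K, p)))\<^sup>2 = (cmod (C K))\<^sup>2 / fact n" if "p permutes {..<n}" for K p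
    by (simp add: slater_coeff_def norm_divide norm_mult power_divide power_mult_distrib sign_def)
  then have "(\<Sum>u\<in>S \<times> {p. p permutes {..<n}}. (cmod (slater_coeff C n u))\<^sup>2)
      = (\<Sum>K\<in>S. \<Sum>p\<in>{p. p permutes {..<n}}. (cmod (C K))\<^sup>2 / fact n)"
    unfolding sum.cartesian_product' by (intro sum.cong) auto
  moreover have "card {p. p permutes {..<n}} = fact n"
    by (rule card_permutations) simp_all
  ultimately show ?thesis
    by simp
qed

lemma bij_eq_off_point:
  assumes "bij f" and "bij g" and "\<And>x. x \<noteq> a \<Longrightarrow> f x = g x"
  shows "f = g"
proof
  fix x
  show "f x = g x"
  proof (rule ccontr)
    assume ne: "f x \<noteq> g x"
    then have "x = a"
      using assms(3) by blast
    obtain y where "f y = g a"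
      using bij_is_surj[OF \<open>bij f\<close>] by (metis surjD)
    then have "y \<noteq> a"
      using ne \<open>x = a\<close> by auto
    then have "g y = g a"
      using \<open>f y = g a\<close> assms(3) by simp
    then show False
      using \<open>y \<noteq> a\<close> \<open>bij g\<close> by (simp add: bij_is_inj inj_eq)
  qed
qed

lemma slater_momenta_agree_off_point:
  assumes enum: "bij_betw (enum K) {..<n} K" "bij_betw (enum K') {..<n} K'"
    and p: "p permutes {..<n}" and q: "q permutes {..<n}"
    and agree: "\<forall>l\<in>{..<n} - {j}. enum K (inv p l) = enum K' (inv q l)"
    and separated: "K \<noteq> K' \<Longrightarrow> 2 \<le> card (K - K')"
  shows "K = K' \<and> p = q"
proof -
  \<comment> \<open>Only the momentum placed at particle \<open>j\<close> can be missing from \<open>K'\<close>, so (adr) forces \<open>K = K'\<close>.\<close>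
  have "K - K' \<subseteq> {enum K (inv p j)}"
  proof
    fix k
    assume k: "k \<in> K - K'"
    then obtain i where i: "i < n" "k = enum K i"
      using enum(1) by (auto simp: bij_betw_def)
    have "p i < n" and "inv p (p i) = i"
      using i permutes_in_image[OF p, of i] p by (simp_all add: permutes_inverses(2))
    have "p i = j"
    proof (rule ccontr)
      assume "p i \<noteq> j"
      then have "enum K (inv p (p i)) = enum K' (inv q (p i))"
        using agree \<open>p i < n\<close> by simp
      then have "k = enum K' (inv q (p i))"
        using \<open>inv p (p i) = i\<close> i by simp
      moreover have "inv q (p i) < n"
        using \<open>p i < n\<close> permutes_in_image[OF permutes_inv[OF q], of "p i"] by simp
      ultimately have "k \<in> K'"
        using bij_betw_apply[OF enum(2)] by simp
      then show False
        using k by simp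
    qed
    then show "k \<in> {enum K (inv p j)}"
      using i \<open>inv p (p i) = i\<close> by simp
  qed
  then have "card (K - K') \<le> 1"
    using card_mono[OF _ \<open>K - K' \<subseteq> _\<close>] by simp
  then have "K = K'"
    using separated by linarith
  have "inv p = inv q"
  proof (rule bij_eq_off_point)
    show "bij (inv p)" and "bij (inv q)"
      using permutes_bij[OF permutes_inv[OF p]] permutes_bij[OF permutes_inv[OF q]] by simp_all
    show "inv p l = inv q l" if "l \<noteq> j" for l
    proof (cases "l < n")
      case True
      then have "inv p l < n" and "inv q l < n"
        using permutes_in_image[OF permutes_inv[OF p], of l] permutes_in_image[OF permutes_inv[OF q], of l]
        by simp_all
      then show ?thesis
        using agree \<open>K = K'\<close> True \<open>l \<noteq> j\<close> enum(1)
        by (auto simp: bij_betw_def inj_on_def)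
    next
      case False
      then show ?thesis
        using permutes_inv[OF p] permutes_inv[OF q] by (simp add: permutes_not_in)
    qed
  qed
  then show ?thesis
    using \<open>K = K'\<close> permutes_inv_inv[OF p] permutes_inv_inv[OF q] by metis
qed

context
  fixes N :: nat and S :: "pt set set" and C :: "pt set \<Rightarrow> complex"
    and enum :: "pt set \<Rightarrow> nat \<Rightarrow> pt" and \<psi> :: "config \<Rightarrow> complex"
  assumes N: "N > 0" and finite_S: "finite S" and S_Xi: "\<And>K. K \<in> S \<Longrightarrow> K \<subseteq> Xi N"
    and enum: "\<And>K. K \<in> S \<Longrightarrow> bij_betw (enum K) {..<Nbar N} K"
    and adr: "adr S C"
    and expansion: "\<And>x. \<psi> x = (\<Sum>K\<in>S. C K * ext_prod (Nbar N) (\<lambda>j. plane_wave (enum K j)) x)"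
begin

private abbreviation "slater_terms \<equiv> S \<times> {p. p permutes {..<Nbar N}}"

private lemma slater_momentum_Xi:
  assumes "u \<in> slater_terms" and "l < Nbar N"
  shows "slater_momentum enum u l \<in> Xi N"
proof -
  obtain K p where u: "u = (K, p)" and "K \<in> S" and "p permutes {..<Nbar N}"
    using assms(1) by auto
  then have "inv p l < Nbar N"
    using assms(2) permutes_in_image[OF permutes_inv, of p "{..<Nbar N}" l] by simp
  then have "enum K (inv p l) \<in> K"
    using bij_betw_apply[OF enum[OF \<open>K \<in> S\<close>]] by simp
  then show ?thesis
    using S_Xi[OF \<open>K \<in> S\<close>] by (auto simp: slater_momentum_def u)
qed

private lemma slater_momenta_distinct:
  assumes "u \<in> slater_terms" and "u' \<in> slater_terms"
    and "slater_coeff C (Nbar N) u \<noteq> 0" and "slater_coeff C (Nbar N) u' \<noteq> 0"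
    and "\<forall>l\<in>{..<Nbar N} - {j}. slater_momentum enum u l = slater_momentum enum u' l"
  shows "u = u'"
proof -
  obtain K p K' q where u: "u = (K, p)" and u': "u' = (K', q)"
    by fastforce
  have "C K \<noteq> 0" and "C K' \<noteq> 0"
    using assms(3,4) by (auto simp: slater_coeff_def u u')
  then have "K \<noteq> K' \<Longrightarrow> 2 \<le> card (K - K')"
    using adr assms(1,2) by (auto simp: adr_def u u')
  then show ?thesis
    using slater_momenta_agree_off_point[of enum K "Nbar N" K' p q j] assms(1,2,5) enum
    by (auto simp: u u' slater_momentum_def)
qed

lemma integral_norm_square_slater:
  "integral\<^sup>L (torus_prod N {..<Nbar N}) (\<lambda>y. (cmod (\<psi> y))\<^sup>2)
     = (\<Sum>K\<in>S. (cmod (C K))\<^sup>2) * (real N ^ 3) ^ Nbar N"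
  unfolding expansion slater_expansion[OF finite_S]
    sum_norm_slater_coeff[where S = S and n = "Nbar N" and C = C, symmetric]
  using torus_parseval[OF N _ finite_lessThan, where U = slater_terms and a = "slater_coeff C (Nbar N)"
      and k = "slater_momentum enum"]
    finite_S slater_momentum_Xi slater_momenta_distinct[of _ _ 0]
  by (simp add: finite_permutations)

lemma marginal_slater:
  assumes "j < Nbar N"
  shows "marginal N \<psi> j x = (\<Sum>K\<in>S. (cmod (C K))\<^sup>2) * (real N ^ 3) ^ (Nbar N - 1)"
proof -
  define a where "a u = slater_coeff C (Nbar N) u * plane_wave (slater_momentum enum u j) x" for u
  have "\<psi> (y(j := x))
      = (\<Sum>u\<in>slater_terms. a u * (\<Prod>l\<in>{..<Nbar N} - {j}. plane_wave (slater_momentum enum u l) (y l)))" for y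
    unfolding expansion slater_expansion[OF finite_S] a_def
    using assms by (simp add: prod.remove[of "{..<Nbar N}" j] mult.assoc)
  moreover have "cmod (a u) = cmod (slater_coeff C (Nbar N) u)" for u
    by (simp add: a_def plane_wave_def norm_mult)
  moreover have "card ({..<Nbar N} - {j}) = Nbar N - 1"
    using assms by simp
  ultimately show ?thesis
    unfolding marginal_def sum_norm_slater_coeff[where S = S and n = "Nbar N" and C = C, symmetric]
    using torus_parseval[OF N, where U = slater_terms and I = "{..<Nbar N} - {j}" and a = a
        and k = "slater_momentum enum"]
      finite_S slater_momentum_Xi slater_momenta_distinct[of _ _ j]
    by (simp add: finite_permutations a_def plane_wave_def)
qed

end

theorem lemma4p1:
  fixes N :: nat and e Z :: real
    and \<psi>0 :: "config \<Rightarrow> complex"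
    and C :: "pt set \<Rightarrow> complex"
    and enum :: "pt set \<Rightarrow> nat \<Rightarrow> pt"
  assumes "N > 0" and "e > 0" and "Z > 0"
    and eig: "antisym_eigenfunction N (omega0 N) \<psi>0"
    and enum: "\<forall>K\<in>kbar_sets N (omega0 N). bij_betw (enum K) {..<Nbar N} K"
    and expansion: "\<forall>x. \<psi>0 x = (\<Sum>K\<in>kbar_sets N (omega0 N).
                       C K * ext_prod (Nbar N) (\<lambda>j. plane_wave (enum K j)) x)"
    and adr: "adr (kbar_sets N (omega0 N)) C"
    and norm: "integral\<^sup>L (torus_prod N {..<Nbar N}) (\<lambda>y. (cmod (\<psi>0 y))\<^sup>2) = Z"
  shows "(\<forall>x. rho_e N e \<psi>0 x = - e * Z) \<and> (\<forall>x. marginal N \<psi>0 0 x = Z / real (Nbar N))"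
proof -
  define W where "W = (\<Sum>K\<in>kbar_sets N (omega0 N). (cmod (C K))\<^sup>2)"
  have finite: "finite (kbar_sets N (omega0 N))"
  proof (rule ccontr)
    \<comment> \<open>a sum over an infinite set is 0 in HOL\<close>
    assume "infinite (kbar_sets N (omega0 N))"
    then have "\<psi>0 = (\<lambda>_. 0)"
      using expansion by auto
    then show False
      using norm \<open>Z > 0\<close> by simp
  qed
  have Xi: "K \<subseteq> Xi N" if "K \<in> kbar_sets N (omega0 N)" for K
    using that by (simp add: kbar_sets_def)
  note slater = finite Xi enum[rule_format] adr expansion[rule_format]
  have n: "real (Nbar N) = real N ^ 3" and "Nbar N > 0"
    using \<open>N > 0\<close> by (simp_all add: Nbar_def)
  have "Z = W * (real N ^ 3) ^ Nbar N"
    using integral_norm_square_slater[OF \<open>N > 0\<close> slater] norm by (simp add: W_def)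
  then have marginal: "marginal N \<psi>0 j x = Z / real (Nbar N)" if "j < Nbar N" for j x
    using marginal_slater[OF \<open>N > 0\<close> slater that] \<open>Nbar N > 0\<close> n
    by (simp add: W_def power_eq_if[of _ "Nbar N"])
  then have "rho_e N e \<psi>0 x = - e * Z" for x
    using \<open>Nbar N > 0\<close> by (simp add: rho_e_def)
  then show ?thesis
    using marginal \<open>Nbar N > 0\<close> by simp
qed

end
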